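(* Let $\mathcal{D}$ be a vector lattice of bounded real functions on a nonempty set $X$ with the Stone property, and let $(\mathcal{E},\mathcal{D})$ be a bilinear form on which the unit contraction operates. Then $K(f):=\inf\{\mathcal{E}(f,\varphi):\varphi\in E_f\}$, $f\in\mathcal{D}_0^+$, defines a functional on the cone $\mathcal{D}_0^+$ which is additive, positively homogeneous and takes values in $[0,\infty)$.
   Context: Stone property: $f\in\mathcal{D}\Rightarrow f\wedge1\in\mathcal{D}$. Unit contraction $T_1(x)=\max(x,0)\wedge1$; it operates on $(\mathcal{E},\mathcal{D})$ if $\mathcal{E}(T_1(f))\le\mathcal{E}(f)$ for all $f\in\mathcal{D}$. A bilinear form is a symmetric nonnegative definite bilinear map, $\mathcal{E}(f)=\mathcal{E}(f,f)$. For $f\in\mathcal{D}^+$ (nonnegative elements), $E_f:=\{\varphi\in\mathcal{D}:\mathbf 1_{\{f>0\}}\le\varphi\le\mathbf 1\}$; $\mathcal{D}_0^+:=\{f\in\mathcal{D}^+:E_f\ne\emptyset\}$ and $\mathcal{D}_0$ the linear span of $\mathcal{D}_0^+$. *)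

theory Defs
  imports Main "HOL-Library.Indicator_Function"
begin

text \<open>Functions on the nonempty set X are modelled as functions on the (nonempty) type 'a.\<close>

definition vector_lattice_of_bounded_functions :: "('a \<Rightarrow> real) set \<Rightarrow> bool" where
  "vector_lattice_of_bounded_functions D \<longleftrightarrow>
     (\<lambda>x. 0) \<in> D \<and>
     (\<forall>f\<in>D. \<forall>g\<in>D. (\<lambda>x. f x + g x) \<in> D) \<and>
     (\<forall>f\<in>D. \<forall>c::real. (\<lambda>x. c * f x) \<in> D) \<and>
     (\<forall>f\<in>D. \<forall>g\<in>D. (\<lambda>x. max (f x) (g x)) \<in> D) \<and>
     (\<forall>f\<in>D. \<exists>B. \<forall>x. \<bar>f x\<bar> \<le> B)"

definition stone_property :: "('a \<Rightarrow> real) set \<Rightarrow> bool" where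
  "stone_property D \<longleftrightarrow> (\<forall>f\<in>D. (\<lambda>x. min (f x) 1) \<in> D)"

definition bilinear_form_on ::
  "('a \<Rightarrow> real) set \<Rightarrow> (('a \<Rightarrow> real) \<Rightarrow> ('a \<Rightarrow> real) \<Rightarrow> real) \<Rightarrow> bool" where
  "bilinear_form_on D E \<longleftrightarrow>
     (\<forall>f\<in>D. \<forall>g\<in>D. E f g = E g f) \<and>
     (\<forall>f\<in>D. \<forall>g\<in>D. \<forall>h\<in>D. E (\<lambda>x. f x + g x) h = E f h + E g h) \<and>
     (\<forall>f\<in>D. \<forall>h\<in>D. \<forall>c::real. E (\<lambda>x. c * f x) h = c * E f h) \<and>
     (\<forall>f\<in>D. E f f \<ge> 0)"

definition unit_contraction :: "real \<Rightarrow> real" where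
  "unit_contraction t = min (max t 0) 1"

definition unit_contraction_operates ::
  "('a \<Rightarrow> real) set \<Rightarrow> (('a \<Rightarrow> real) \<Rightarrow> ('a \<Rightarrow> real) \<Rightarrow> real) \<Rightarrow> bool" where
  "unit_contraction_operates D E \<longleftrightarrow>
     (\<forall>f\<in>D. E (\<lambda>x. unit_contraction (f x)) (\<lambda>x. unit_contraction (f x)) \<le> E f f)"

definition Dplus :: "('a \<Rightarrow> real) set \<Rightarrow> ('a \<Rightarrow> real) set" where
  "Dplus D = {f\<in>D. \<forall>x. 0 \<le> f x}"

definition Eset :: "('a \<Rightarrow> real) set \<Rightarrow> ('a \<Rightarrow> real) \<Rightarrow> ('a \<Rightarrow> real) set" where
  "Eset D f = {\<phi>\<in>D. \<forall>x. indicator {y. f y > 0} x \<le> \<phi> x \<and> \<phi> x \<le> 1}"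

definition D0plus :: "('a \<Rightarrow> real) set \<Rightarrow> ('a \<Rightarrow> real) set" where
  "D0plus D = {f\<in>Dplus D. Eset D f \<noteq> {}}"

definition Kfun ::
  "('a \<Rightarrow> real) set \<Rightarrow> (('a \<Rightarrow> real) \<Rightarrow> ('a \<Rightarrow> real) \<Rightarrow> real) \<Rightarrow> ('a \<Rightarrow> real) \<Rightarrow> real" where
  "Kfun D E f = Inf ((\<lambda>\<phi>. E f \<phi>) ` Eset D f)"

end

theory Submission
  imports Defs Complex_Main
begin

text \<open>
  The key analytic fact is a variational consequence of the unit contraction:
  if u, v \<in> D and contracting u + t v gives back u for every t > 0, then
  E(u,u) \<le> E(u + t v, u + t v) = E(u,u) + 2t E(u,v) + t^2 E(v,v), and letting t \<rightarrow> 0 forces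
  E(u,v) \<ge> 0.  Two instances give, for f \<in> D^+:
    (1) E(f,\<phi>) \<ge> 0 for every \<phi> \<in> E_f (take u = \<phi>, v = f), and
    (2) E(f,h) \<le> 0 for every h \<ge> 0 vanishing on {f > 0} (take u = c f, v = -h, c small),
  hence (3) \<phi> \<mapsto> E(f,\<phi>) is antitone on E_f.  By (1) the infimum K(f) exists and is \<ge> 0.
  For additivity, E_{f+g} \<subseteq> E_f \<inter> E_g gives K(f) + K(g) \<le> K(f+g); conversely
  max(\<phi>,\<psi>) \<in> E_{f+g} for \<phi> \<in> E_f, \<psi> \<in> E_g, and by (3)
  E(f+g, max(\<phi>,\<psi>)) \<le> E(f,\<phi>) + E(g,\<psi>).  Homogeneity follows from E_{cf} = E_f.
  The hypotheses are collected in a locale.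
\<close>

section \<open>Test functions\<close>

lemma Eset_iff:
  "\<phi> \<in> Eset D f \<longleftrightarrow> \<phi> \<in> D \<and> (\<forall>x. 0 \<le> \<phi> x \<and> \<phi> x \<le> 1 \<and> (0 < f x \<longrightarrow> \<phi> x = 1))"
proof -
  have "(indicator {y. 0 < f y} x \<le> \<phi> x \<and> \<phi> x \<le> 1)
      \<longleftrightarrow> (0 \<le> \<phi> x \<and> \<phi> x \<le> 1 \<and> (0 < f x \<longrightarrow> \<phi> x = 1))" for x
    by (auto simp: indicator_def)
  then show ?thesis unfolding Eset_def by auto
qed

lemma Eset_add_subset:
  fixes f g :: "'a \<Rightarrow> real"
  assumes "\<And>x. 0 \<le> f x" and "\<And>x. 0 \<le> g x"
  shows "Eset D (\<lambda>x. f x + g x) \<subseteq> Eset D f"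
proof
  fix \<phi> assume "\<phi> \<in> Eset D (\<lambda>x. f x + g x)"
  moreover have "0 < f x \<Longrightarrow> 0 < f x + g x" for x using assms(2)[of x] by simp
  ultimately show "\<phi> \<in> Eset D f" unfolding Eset_iff by blast
qed

text \<open>Test functions only see the support {f > 0}, which is invariant under positive scaling.\<close>
lemma Eset_scale:
  fixes f :: "'a \<Rightarrow> real"
  assumes "0 < c"
  shows "Eset D (\<lambda>x. c * f x) = Eset D f"
proof -
  have "{y. 0 < c * f y} = {y. 0 < f y}" using assms by (auto simp: zero_less_mult_iff)
  then show ?thesis unfolding Eset_def by simp
qed

lemma nonneg_of_perturbation:
  fixes a b :: real
  assumes pert: "\<And>t. 0 < t \<Longrightarrow> 0 \<le> 2*t*a + t\<^sup>2*b" and "0 \<le> b"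
  shows "0 \<le> a"
proof (rule ccontr)
  assume "\<not> 0 \<le> a"
  define t where "t = -a / (b + 1)"
  have t: "0 < t" using \<open>\<not> 0 \<le> a\<close> \<open>0 \<le> b\<close> unfolding t_def by (intro divide_pos_pos) auto
  have "t * b \<le> -a" unfolding t_def using \<open>\<not> 0 \<le> a\<close> \<open>0 \<le> b\<close> by (simp add: field_simps)
  then have "t * (2*a + t*b) < 0" using t \<open>\<not> 0 \<le> a\<close> by (simp add: mult_pos_neg)
  also have "t * (2*a + t*b) = 2*t*a + t\<^sup>2*b" by (simp add: power2_eq_square algebra_simps)
  finally show False using pert[OF t] by simp
qed

lemma Inf_scale_pos:
  fixes S :: "real set"
  assumes "0 < c" and "S \<noteq> {}" and "bdd_below S"
  shows "Inf ((\<lambda>x. c * x) ` S) = c * Inf S"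
  using continuous_at_Inf_mono[of "\<lambda>x. c * x" S] assms
  by (simp add: mono_def continuous_intros)

locale contraction_form =
  fixes D :: "('a \<Rightarrow> real) set"
    and E :: "('a \<Rightarrow> real) \<Rightarrow> ('a \<Rightarrow> real) \<Rightarrow> real"
  assumes lattice: "vector_lattice_of_bounded_functions D"
    and form: "bilinear_form_on D E"
    and contraction: "unit_contraction_operates D E"
begin

lemma add_closed: "f \<in> D \<Longrightarrow> g \<in> D \<Longrightarrow> (\<lambda>x. f x + g x) \<in> D"
  and scale_closed: "f \<in> D \<Longrightarrow> (\<lambda>x. c * f x) \<in> D"
  and max_closed: "f \<in> D \<Longrightarrow> g \<in> D \<Longrightarrow> (\<lambda>x. max (f x) (g x)) \<in> D"
  and bounded: "f \<in> D \<Longrightarrow> \<exists>B. \<forall>x. \<bar>f x\<bar> \<le> B"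
  using lattice unfolding vector_lattice_of_bounded_functions_def by blast+

lemma E_sym: "f \<in> D \<Longrightarrow> g \<in> D \<Longrightarrow> E f g = E g f"
  and E_add_left: "f \<in> D \<Longrightarrow> g \<in> D \<Longrightarrow> h \<in> D \<Longrightarrow> E (\<lambda>x. f x + g x) h = E f h + E g h"
  and E_scale_left: "f \<in> D \<Longrightarrow> h \<in> D \<Longrightarrow> E (\<lambda>x. c * f x) h = c * E f h"
  and E_nonneg: "f \<in> D \<Longrightarrow> 0 \<le> E f f"
  using form unfolding bilinear_form_on_def by blast+

lemma E_scale_right:
  assumes f: "f \<in> D" and h: "h \<in> D"
  shows "E f (\<lambda>x. c * h x) = c * E f h"
  using E_sym[OF f scale_closed[OF h]] E_scale_left[OF h f] E_sym[OF h f] by simp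

lemma E_add_right:
  assumes f: "f \<in> D" and g: "g \<in> D" and h: "h \<in> D"
  shows "E h (\<lambda>x. f x + g x) = E h f + E h g"
  using E_sym[OF h add_closed[OF f g]] E_add_left[OF f g h] E_sym[OF h f] E_sym[OF h g] by simp

lemma E_contract: "f \<in> D \<Longrightarrow>
    E (\<lambda>x. unit_contraction (f x)) (\<lambda>x. unit_contraction (f x)) \<le> E f f"
  using contraction unfolding unit_contraction_operates_def by blast

lemma E_expand:
  assumes u: "u \<in> D" and v: "v \<in> D"
  shows "E (\<lambda>x. u x + t * v x) (\<lambda>x. u x + t * v x) = E u u + 2*t*E u v + t\<^sup>2*E v v"
proof -
  have tv: "(\<lambda>x. t * v x) \<in> D" using scale_closed[OF v] .
  have w: "(\<lambda>x. u x + t * v x) \<in> D" using add_closed[OF u tv] .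
  have "E (\<lambda>x. u x + t * v x) (\<lambda>x. u x + t * v x)
      = E u (\<lambda>x. u x + t * v x) + t * E v (\<lambda>x. u x + t * v x)"
    using E_add_left[OF u tv w] E_scale_left[OF v w] by simp
  also have "\<dots> = E u u + t * E u v + t * (E v u + t * E v v)"
    using E_add_right[OF u tv] E_scale_right u v by simp
  finally show ?thesis using E_sym[OF u v] by (simp add: power2_eq_square algebra_simps)
qed

lemma contraction_variation:
  assumes u: "u \<in> D" and v: "v \<in> D"
    and fixed: "\<And>t x. 0 < t \<Longrightarrow> unit_contraction (u x + t * v x) = u x"
  shows "0 \<le> E u v"
proof (rule nonneg_of_perturbation[OF _ E_nonneg[OF v]])
  fix t :: real assume "0 < t"
  have "E u u = E (\<lambda>x. unit_contraction (u x + t * v x)) (\<lambda>x. unit_contraction (u x + t * v x))"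
    using fixed[OF \<open>0 < t\<close>] by simp
  also have "\<dots> \<le> E (\<lambda>x. u x + t * v x) (\<lambda>x. u x + t * v x)"
    using E_contract add_closed[OF u scale_closed[OF v]] by blast
  also have "\<dots> = E u u + 2*t*E u v + t\<^sup>2*E v v" using E_expand[OF u v] .
  finally show "0 \<le> 2*t*E u v + t\<^sup>2*E v v" by simp
qed

lemma E_test_nonneg:
  assumes f: "f \<in> Dplus D" and \<phi>: "\<phi> \<in> Eset D f"
  shows "0 \<le> E f \<phi>"
proof -
  have fD: "f \<in> D" and f0: "\<And>x. 0 \<le> f x" using f unfolding Dplus_def by auto
  have \<phi>D: "\<phi> \<in> D" and \<phi>: "\<And>x. 0 \<le> \<phi> x \<and> \<phi> x \<le> 1 \<and> (0 < f x \<longrightarrow> \<phi> x = 1)"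
    using \<phi> unfolding Eset_iff by auto
  have "unit_contraction (\<phi> x + t * f x) = \<phi> x" if "0 < t" for t x
    using \<phi>[of x] f0[of x] \<open>0 < t\<close> unfolding unit_contraction_def
    by (cases "0 < f x") auto
  then have "0 \<le> E \<phi> f" using contraction_variation[OF \<phi>D fD] by blast
  then show ?thesis using E_sym[OF fD \<phi>D] by simp
qed

text \<open>(2) A nonnegative f has nonpositive energy against nonnegative functions vanishing
  on its support.  The contraction fixes c f - t h once c f takes values below 1.\<close>
lemma E_orthogonal_nonpos:
  assumes f: "f \<in> Dplus D" and h: "h \<in> D" and h0: "\<And>x. 0 \<le> h x"
    and vanish: "\<And>x. 0 < f x \<Longrightarrow> h x = 0"
  shows "E f h \<le> 0"
proof -
  have fD: "f \<in> D" and f0: "\<And>x. 0 \<le> f x" using f unfolding Dplus_def by auto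
  obtain B where B: "\<And>x. \<bar>f x\<bar> \<le> B" using bounded[OF fD] by blast
  define c where "c = 1 / (B + 1)"
  have "0 \<le> B" using B[of undefined] by simp
  then have c: "0 < c" unfolding c_def by simp
  have cf_below_1: "c * f x < 1" for x
    using B[of x] \<open>0 \<le> B\<close> unfolding c_def by (simp add: field_simps)
  have "unit_contraction (c * f x + t * (-1 * h x)) = c * f x" if "0 < t" for t x
    using cf_below_1[of x] c f0[of x] h0[of x] vanish[of x] \<open>0 < t\<close>
    unfolding unit_contraction_def by (cases "0 < f x") auto
  then have "0 \<le> E (\<lambda>x. c * f x) (\<lambda>x. -1 * h x)"
    using contraction_variation[OF scale_closed[OF fD] scale_closed[OF h]] by blast
  also have "\<dots> = - c * E f h"
    using E_scale_left[OF fD scale_closed[OF h, of "-1"], of c] E_scale_right[OF fD h, of "-1"]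
    by simp
  finally show ?thesis using c by (simp add: mult_le_0_iff)
qed

lemma E_test_antimono:
  assumes f: "f \<in> Dplus D" and \<phi>: "\<phi> \<in> Eset D f" and \<chi>: "\<chi> \<in> Eset D f"
    and le: "\<And>x. \<phi> x \<le> \<chi> x"
  shows "E f \<chi> \<le> E f \<phi>"
proof -
  have fD: "f \<in> D" using f unfolding Dplus_def by auto
  have \<phi>D: "\<phi> \<in> D" and \<chi>D: "\<chi> \<in> D" using \<phi> \<chi> unfolding Eset_iff by auto
  define h where "h = (\<lambda>x. \<chi> x + -1 * \<phi> x)"
  have hD: "h \<in> D" unfolding h_def using add_closed[OF \<chi>D scale_closed[OF \<phi>D]] .
  have "h x = 0" if "0 < f x" for x using \<phi> \<chi> that unfolding Eset_iff h_def by simp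
  moreover have "0 \<le> h x" for x using le[of x] unfolding h_def by simp
  ultimately have "E f h \<le> 0" using E_orthogonal_nonpos[OF f hD] by blast
  moreover have "E f h = E f \<chi> - E f \<phi>"
    unfolding h_def
    using E_add_right[OF \<chi>D scale_closed[OF \<phi>D, of "-1"] fD] E_scale_right[OF fD \<phi>D, of "-1"]
    by simp
  ultimately show ?thesis by simp
qed

lemma Eset_max:
  fixes f g :: "'a \<Rightarrow> real"
  assumes \<phi>: "\<phi> \<in> Eset D f" and \<psi>: "\<psi> \<in> Eset D g"
  shows "(\<lambda>x. max (\<phi> x) (\<psi> x)) \<in> Eset D (\<lambda>x. f x + g x)"
proof -
  have \<phi>D: "\<phi> \<in> D" and \<phi>x: "\<And>x. 0 \<le> \<phi> x \<and> \<phi> x \<le> 1 \<and> (0 < f x \<longrightarrow> \<phi> x = 1)"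
    and \<psi>D: "\<psi> \<in> D" and \<psi>x: "\<And>x. 0 \<le> \<psi> x \<and> \<psi> x \<le> 1 \<and> (0 < g x \<longrightarrow> \<psi> x = 1)"
    using \<phi> \<psi> unfolding Eset_iff by auto
  have "max (\<phi> x) (\<psi> x) = 1" if "0 < f x + g x" for x
  proof (cases "0 < f x")
    case True
    then show ?thesis using \<phi>x[of x] \<psi>x[of x] by (simp add: max_def)
  next
    case False
    then have "0 < g x" using that by linarith
    then show ?thesis using \<phi>x[of x] \<psi>x[of x] by (simp add: max_def)
  qed
  then show ?thesis using \<phi>x \<psi>x max_closed[OF \<phi>D \<psi>D] unfolding Eset_iff
    by (auto simp: le_max_iff_disj)
qed

lemma D0plus_iff:
  "f \<in> D0plus D \<longleftrightarrow> f \<in> D \<and> (\<forall>x. 0 \<le> f x) \<and> Eset D f \<noteq> {}"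
  unfolding D0plus_def Dplus_def by auto

lemma D0plus_Dplus: "f \<in> D0plus D \<Longrightarrow> f \<in> Dplus D"
  unfolding D0plus_def by simp

lemma D0plus_add:
  assumes "f \<in> D0plus D" and "g \<in> D0plus D"
  shows "(\<lambda>x. f x + g x) \<in> D0plus D"
proof -
  have fD: "f \<in> D" and f0: "\<And>x. 0 \<le> f x" and gD: "g \<in> D" and g0: "\<And>x. 0 \<le> g x"
    using assms unfolding D0plus_iff by auto
  obtain \<phi> \<psi> where "\<phi> \<in> Eset D f" "\<psi> \<in> Eset D g" using assms unfolding D0plus_iff by blast
  then have "(\<lambda>x. max (\<phi> x) (\<psi> x)) \<in> Eset D (\<lambda>x. f x + g x)"
    using Eset_max by blast
  then show ?thesis using add_closed[OF fD gD] f0 g0 unfolding D0plus_iff by (auto intro: add_nonneg_nonneg)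
qed

lemma D0plus_Eset_add:
  assumes "f \<in> D0plus D" and "g \<in> D0plus D"
  shows "Eset D (\<lambda>x. f x + g x) \<subseteq> Eset D f \<inter> Eset D g"
proof -
  have "\<forall>x. 0 \<le> f x" "\<forall>x. 0 \<le> g x" using assms unfolding D0plus_iff by auto
  then have "Eset D (\<lambda>x. f x + g x) \<subseteq> Eset D f" "Eset D (\<lambda>x. g x + f x) \<subseteq> Eset D g"
    using Eset_add_subset[of f g D] Eset_add_subset[of g f D] by auto
  moreover have "(\<lambda>x. g x + f x) = (\<lambda>x. f x + g x)" by (simp add: add.commute)
  ultimately show ?thesis by auto
qed

lemma D0plus_scale:
  assumes "f \<in> D0plus D" and "0 < c"
  shows "(\<lambda>x. c * f x) \<in> D0plus D"
  using assms scale_closed unfolding D0plus_iff by (simp add: Eset_scale)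

section \<open>The functional K\<close>

lemma K_values_bdd_below:
  assumes "f \<in> D0plus D"
  shows "bdd_below ((\<lambda>\<phi>. E f \<phi>) ` Eset D f)"
  using E_test_nonneg[OF D0plus_Dplus[OF assms]] unfolding bdd_below_def by blast

lemma K_lower:
  assumes "f \<in> D0plus D" and "\<phi> \<in> Eset D f"
  shows "Kfun D E f \<le> E f \<phi>"
  unfolding Kfun_def using cInf_lower[OF _ K_values_bdd_below[OF assms(1)]] assms(2) by blast

lemma K_greatest:
  assumes "f \<in> D0plus D" and "\<And>\<phi>. \<phi> \<in> Eset D f \<Longrightarrow> m \<le> E f \<phi>"
  shows "m \<le> Kfun D E f"
  unfolding Kfun_def using assms unfolding D0plus_iff by (auto intro!: cInf_greatest)

lemma K_nonneg: "f \<in> D0plus D \<Longrightarrow> 0 \<le> Kfun D E f"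
  using K_greatest E_test_nonneg D0plus_Dplus by blast

text \<open>Superadditivity: every test function for f + g is one for f and for g.\<close>
lemma K_superadditive:
  assumes f: "f \<in> D0plus D" and g: "g \<in> D0plus D"
  shows "Kfun D E f + Kfun D E g \<le> Kfun D E (\<lambda>x. f x + g x)"
proof (rule K_greatest[OF D0plus_add[OF f g]])
  fix \<phi> assume \<phi>: "\<phi> \<in> Eset D (\<lambda>x. f x + g x)"
  then have "\<phi> \<in> Eset D f" and "\<phi> \<in> Eset D g" using D0plus_Eset_add[OF f g] by auto
  moreover have "E (\<lambda>x. f x + g x) \<phi> = E f \<phi> + E g \<phi>"
    using E_add_left f g \<phi> unfolding D0plus_iff Eset_iff by blast
  ultimately show "Kfun D E f + Kfun D E g \<le> E (\<lambda>x. f x + g x) \<phi>"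
    using K_lower[OF f] K_lower[OF g] by fastforce
qed

text \<open>Subadditivity: test with max(\<phi>,\<psi>) and use that E(f,\<cdot>) is antitone on test functions.\<close>
lemma K_subadditive:
  assumes f: "f \<in> D0plus D" and g: "g \<in> D0plus D"
  shows "Kfun D E (\<lambda>x. f x + g x) \<le> Kfun D E f + Kfun D E g"
proof -
  have bound: "Kfun D E (\<lambda>x. f x + g x) \<le> E f \<phi> + E g \<psi>"
    if \<phi>: "\<phi> \<in> Eset D f" and \<psi>: "\<psi> \<in> Eset D g" for \<phi> \<psi>
  proof -
    let ?m = "\<lambda>x. max (\<phi> x) (\<psi> x)"
    have m: "?m \<in> Eset D (\<lambda>x. f x + g x)" using Eset_max[OF \<phi> \<psi>] .
    have mf: "?m \<in> Eset D f" and mg: "?m \<in> Eset D g" using D0plus_Eset_add[OF f g] m by auto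
    have "Kfun D E (\<lambda>x. f x + g x) \<le> E (\<lambda>x. f x + g x) ?m" using K_lower[OF D0plus_add[OF f g] m] .
    also have "\<dots> = E f ?m + E g ?m"
      using E_add_left f g m unfolding D0plus_iff Eset_iff by blast
    also have "\<dots> \<le> E f \<phi> + E g \<psi>"
      using E_test_antimono[OF D0plus_Dplus[OF f] \<phi> mf] E_test_antimono[OF D0plus_Dplus[OF g] \<psi> mg]
      by simp
    finally show ?thesis .
  qed
  have "Kfun D E (\<lambda>x. f x + g x) - Kfun D E g \<le> Kfun D E f"
  proof (rule K_greatest[OF f])
    fix \<phi> assume \<phi>: "\<phi> \<in> Eset D f"
    have "Kfun D E (\<lambda>x. f x + g x) - E f \<phi> \<le> Kfun D E g"
    proof (rule K_greatest[OF g])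
      fix \<psi> assume "\<psi> \<in> Eset D g"
      then show "Kfun D E (\<lambda>x. f x + g x) - E f \<phi> \<le> E g \<psi>" using bound[OF \<phi>] by fastforce
    qed
    then show "Kfun D E (\<lambda>x. f x + g x) - Kfun D E g \<le> E f \<phi>" by simp
  qed
  then show ?thesis by simp
qed

lemma K_additive:
  "f \<in> D0plus D \<Longrightarrow> g \<in> D0plus D \<Longrightarrow> Kfun D E (\<lambda>x. f x + g x) = Kfun D E f + Kfun D E g"
  using K_subadditive K_superadditive by (simp add: order_antisym)

text \<open>Homogeneity: E_{cf} = E_f and E(cf,\<phi>) = c E(f,\<phi>).\<close>
lemma K_homogeneous:
  assumes f: "f \<in> D0plus D" and c: "0 < c"
  shows "Kfun D E (\<lambda>x. c * f x) = c * Kfun D E f"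
proof -
  have "E (\<lambda>x. c * f x) \<phi> = c * E f \<phi>" if "\<phi> \<in> Eset D f" for \<phi>
    using E_scale_left f that unfolding D0plus_iff Eset_iff by blast
  then have "(\<lambda>\<phi>. E (\<lambda>x. c * f x) \<phi>) ` Eset D (\<lambda>x. c * f x) = (\<lambda>y. c * y) ` (\<lambda>\<phi>. E f \<phi>) ` Eset D f"
    unfolding Eset_scale[OF c] image_image by (rule image_cong[OF refl])
  then show ?thesis unfolding Kfun_def
    using Inf_scale_pos[OF c _ K_values_bdd_below[OF f]] f unfolding D0plus_iff by simp
qed

end

theorem lemmaL:
  fixes D :: "('a \<Rightarrow> real) set"
    and E :: "('a \<Rightarrow> real) \<Rightarrow> ('a \<Rightarrow> real) \<Rightarrow> real"
  assumes "vector_lattice_of_bounded_functions D"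
    and "stone_property D"
    and "bilinear_form_on D E"
    and "unit_contraction_operates D E"
  shows "(\<forall>f\<in>D0plus D. \<forall>g\<in>D0plus D. (\<lambda>x. f x + g x) \<in> D0plus D)
       \<and> (\<forall>f\<in>D0plus D. \<forall>c::real. c > 0 \<longrightarrow> (\<lambda>x. c * f x) \<in> D0plus D)
       \<and> (\<forall>f\<in>D0plus D. bdd_below ((\<lambda>\<phi>. E f \<phi>) ` Eset D f) \<and> 0 \<le> Kfun D E f)
       \<and> (\<forall>f\<in>D0plus D. \<forall>g\<in>D0plus D.
            Kfun D E (\<lambda>x. f x + g x) = Kfun D E f + Kfun D E g)
       \<and> (\<forall>f\<in>D0plus D. \<forall>c::real. c > 0 \<longrightarrow> Kfun D E (\<lambda>x. c * f x) = c * Kfun D E f)"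
proof -
  interpret contraction_form D E
    using assms(1,3,4) by unfold_locales
  show ?thesis
    by (intro conjI ballI allI impI)
       (simp_all add: D0plus_add D0plus_scale K_values_bdd_below K_nonneg K_additive K_homogeneous)
qed

end
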